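(* For every $d\ge1$, each of the following polynomials is the $f$-polynomial of a simplicial complex: (a) the Eulerian polynomial $A_d(t)=\sum_{\pi\in S_d}t^{\mathrm{des}(\pi)}$; (b) the Stirling polynomial of the second kind $\sum_{k=0}^{d-1}S(d,k+1)\,t^k$; (c) the derangement polynomial $\sum_{k\ge0}D_{d,k}t^k$, where $D_{d,k}$ is the number of derangements of $[d+1]$ with exactly $k+1$ exceedances (equivalently, $D_{d,k}$ is determined by $D_{1,0}=1$, $D_{d,k}=0$ unless $0\le k\le d-1$, and $D_{d,k}=(k+1)D_{d-1,k}+(d-k)D_{d-1,k-1}+d\,D_{d-2,k-1}$ for $d\ge2$).
   Context: $S_d$ is the symmetric group on $[d]=\{1,\dots,d\}$; $\mathrm{des}(\pi)=\#\{i<d:\pi(i)>\pi(i+1)\}$. $S(d,m)$ is the number of set partitions of $[d]$ into $m$ blocks. A derangement is a permutation without fixed points; an exceedance of $\pi$ is an index $i$ with $\pi(i)>i$. The $f$-polynomial of a simplicial complex is $\sum_{i\ge0}f_{i-1}t^i$, where $f_{i-1}$ is the number of faces of cardinality $i$ (constant term $1$ for the empty face). *)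

theory Defs
  imports "HOL-Computational_Algebra.Polynomial" "HOL-Combinatorics.Combinatorics"
begin

definition simplicial_complex :: "nat set set \<Rightarrow> bool" where
  "simplicial_complex K \<longleftrightarrow> finite K \<and> {} \<in> K \<and> (\<forall>F\<in>K. finite F) \<and>
     (\<forall>F\<in>K. \<forall>G. G \<subseteq> F \<longrightarrow> G \<in> K)"

definition f_poly :: "nat set set \<Rightarrow> nat poly" where
  "f_poly K = (\<Sum>F\<in>K. monom 1 (card F))"

definition des :: "nat \<Rightarrow> (nat \<Rightarrow> nat) \<Rightarrow> nat" where
  "des d \<pi> = card {i. 1 \<le> i \<and> i < d \<and> \<pi> i > \<pi> (i + 1)}"

definition eulerian_poly :: "nat \<Rightarrow> nat poly" where
  "eulerian_poly d = (\<Sum>\<pi>\<in>{\<pi>. \<pi> permutes {1..d}}. monom 1 (des d \<pi>))"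

definition stirling2_poly :: "nat \<Rightarrow> nat poly" where
  "stirling2_poly d = (\<Sum>k<d. monom (Stirling d (k + 1)) k)"

definition exc :: "nat \<Rightarrow> (nat \<Rightarrow> nat) \<Rightarrow> nat" where
  "exc n \<pi> = card {i\<in>{1..n}. \<pi> i > i}"

definition derangement_num :: "nat \<Rightarrow> nat \<Rightarrow> nat" where
  "derangement_num d k = card {\<pi>. \<pi> permutes {1..d+1} \<and> (\<forall>i\<in>{1..d+1}. \<pi> i \<noteq> i)
                                 \<and> exc (d+1) \<pi> = k + 1}"

text \<open>A derangement of [d+1] has at most d exceedances, so k ranges over 0..d.\<close>
definition derangement_poly :: "nat \<Rightarrow> nat poly" where
  "derangement_poly d = (\<Sum>k\<le>d. monom (derangement_num d k) k)"

end

theory Submission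
  imports Defs "HOL-Library.Nat_Bijection" "HOL-Library.Disjoint_Sets"
begin

(* For a set W of permutations of {1..n}, the chains of prefix sets w ` {1..i}, taken at the
   positions i of a set of ascents of some w in W, form a simplicial complex. If W is closed under
   passing from w and such a set I to the permutation with ascent set exactly I and the same prefix
   sets at I, then every face is the top face of exactly one element of W, and the f-polynomial is
   the ascent generating polynomial of W.

   For W = all permutations this is the Eulerian polynomial, since reversing the values exchanges
   ascents and descents. For W = the permutations whose runs (the segments starting at the
   left-to-right maxima) all have length at least 2, Foata's fundamental transformation, which turns
   the runs into cycles, is a bijection onto the derangements that adds one exceedance to the number
   of ascents; this gives the derangement polynomial. The Stirling polynomial is the f-polynomial of
   the complex of families of pairwise disjoint nonempty subsets of {2..d}, which correspond to the
   set partitions of {1..d} by adding the uncovered rest of {1..d} as the block of 1. *)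

section \<open>Simplicial complexes on arbitrary vertex types\<close>

definition simplicial_complex' :: "'a set set \<Rightarrow> bool" where
  "simplicial_complex' K \<longleftrightarrow> finite K \<and> {} \<in> K \<and> (\<forall>F\<in>K. finite F) \<and>
     (\<forall>F\<in>K. \<forall>G. G \<subseteq> F \<longrightarrow> G \<in> K)"

definition f_poly' :: "'a set set \<Rightarrow> nat poly" where
  "f_poly' K = (\<Sum>F\<in>K. monom 1 (card F))"

lemma simplicial_complex_image:
  assumes K: "simplicial_complex' K" and h: "inj_on h (\<Union>K)"
  shows "simplicial_complex (image h ` K)" and "f_poly (image h ` K) = f_poly' K"
proof -
  have fin: "finite K" and empty: "{} \<in> K" and finF: "\<forall>F\<in>K. finite F"
    and closed: "\<forall>F\<in>K. \<forall>G. G \<subseteq> F \<longrightarrow> G \<in> K"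
    using K unfolding simplicial_complex'_def by simp_all
  show "simplicial_complex (image h ` K)"
    unfolding simplicial_complex_def
  proof (intro conjI ballI allI impI)
    show "finite (image h ` K)" using fin by simp
    show "{} \<in> image h ` K" using empty by (metis image_empty imageI)
  next
    fix F assume "F \<in> image h ` K"
    then obtain F0 where "F0 \<in> K" "F = h ` F0" by blast
    then show "finite F" using finF by simp
  next
    fix F G assume "F \<in> image h ` K" and G: "G \<subseteq> F"
    then obtain F0 where F0: "F0 \<in> K" "F = h ` F0" by blast
    then have "G = h ` {x\<in>F0. h x \<in> G}" using G by blast
    moreover have "{x\<in>F0. h x \<in> G} \<in> K"
      using closed F0(1) by (simp add: Collect_subset)
    ultimately show "G \<in> image h ` K" by (rule image_eqI)
  qed
  have inj: "inj_on (image h) K"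
    using inj_on_image_Pow[OF h] by (rule inj_on_subset) auto
  have "card (h ` F) = card F" if "F \<in> K" for F
    using that by (intro card_image inj_on_subset[OF h]) auto
  then show "f_poly (image h ` K) = f_poly' K"
    unfolding f_poly_def f_poly'_def sum.reindex[OF inj] by simp
qed

lemma ex_simplicial_complex_f_poly':
  assumes "simplicial_complex' K" and "\<And>F x. F \<in> K \<Longrightarrow> x \<in> F \<Longrightarrow> finite (x :: nat set)"
  shows "\<exists>K'. simplicial_complex K' \<and> f_poly K' = f_poly' K"
proof -
  have "inj_on set_encode (\<Union>K)"
    using inj_on_set_encode by (rule inj_on_subset) (use assms(2) in blast)
  then show ?thesis using simplicial_complex_image[OF assms(1)] by blast
qed

lemma sum_monom_1_group:
  assumes "finite W" and "\<And>w. w \<in> W \<Longrightarrow> f w \<le> m"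
  shows "(\<Sum>w\<in>W. monom 1 (f w)) = (\<Sum>k\<le>m. monom (card {w\<in>W. f w = k}) k)"
proof -
  have "(\<Sum>w\<in>W. monom 1 (f w)) = (\<Sum>k\<le>m. \<Sum>w\<in>{w\<in>W. f w = k}. monom 1 (f w))"
    using assms by (intro sum.group[symmetric]) auto
  also have "\<dots> = (\<Sum>k\<le>m. \<Sum>w\<in>{w\<in>W. f w = k}. monom 1 k)"
    by (intro sum.cong refl) simp
  also have "\<dots> = (\<Sum>k\<le>m. monom (card {w\<in>W. f w = k}) k)"
    by (simp only: card_eq_sum monom_sum)
  finally show ?thesis .
qed


section \<open>Complexes of ascent chains\<close>

definition ascents :: "nat \<Rightarrow> (nat \<Rightarrow> nat) \<Rightarrow> nat set" where
  "ascents n w = {i. 1 \<le> i \<and> i < n \<and> w i < w (Suc i)}"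

definition prefix_set :: "(nat \<Rightarrow> nat) \<Rightarrow> nat \<Rightarrow> nat set" where
  "prefix_set w i = w ` {1..i}"

definition ascent_complex :: "nat \<Rightarrow> (nat \<Rightarrow> nat) set \<Rightarrow> nat set set set" where
  "ascent_complex n W = {prefix_set w ` I | w I. w \<in> W \<and> I \<subseteq> ascents n w}"

lemma ascents_subset: "ascents n w \<subseteq> {1..<n}"
  unfolding ascents_def by auto

lemma finite_ascents [simp]: "finite (ascents n w)"
  using ascents_subset finite_subset by blast

lemma card_ascents_le: "card (ascents n w) \<le> n - 1"
  using card_mono[OF _ ascents_subset] by fastforce

lemma card_prefix_set: "inj w \<Longrightarrow> card (prefix_set w i) = i"
  unfolding prefix_set_def by (simp add: card_image inj_on_subset)

lemma mem_prefix_set_iff: "inj w \<Longrightarrow> w q \<in> prefix_set w i \<longleftrightarrow> q \<in> {1..i}"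
  unfolding prefix_set_def by (rule inj_image_mem_iff)

lemma le_of_ascents_disjoint:
  assumes "{j..<p} \<inter> ascents n w = {}" and "1 \<le> j" and "j \<le> p" and "p \<le> n"
  shows "w p \<le> w j"
  using assms(3,1,4)
proof (induction p rule: dec_induct)
  case (step i)
  have "{j..<i} \<inter> ascents n w = {}" using step.prems(1) by (auto simp: disjoint_iff)
  then have "w i \<le> w j" using step by simp
  moreover have "i \<notin> ascents n w" using step by auto
  ultimately show ?case using step \<open>1 \<le> j\<close> unfolding ascents_def by auto
qed simp

lemma run_value_le:
  assumes \<sigma>: "\<sigma> permutes {1..n}" and \<tau>: "\<tau> permutes {1..n}"
    and asc: "ascents n \<sigma> \<subseteq> I" and pre: "\<And>i. i \<in> I \<Longrightarrow> prefix_set \<sigma> i = prefix_set \<tau> i"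
    and eq: "\<sigma> p = \<tau> j" and j: "1 \<le> j" "j \<le> p" and p: "p \<le> n"
  shows "\<sigma> p \<le> \<sigma> j"
proof (rule le_of_ascents_disjoint[OF _ j p])
  show "{j..<p} \<inter> ascents n \<sigma> = {}"
  proof (rule ccontr)
    assume "{j..<p} \<inter> ascents n \<sigma> \<noteq> {}"
    then obtain i where "i \<in> {j..<p}" "i \<in> ascents n \<sigma>" by blast
    then have i: "j \<le> i" "i < p" "i \<in> I" using asc by auto
    have "\<tau> j \<in> prefix_set \<tau> i" using i j by (simp add: mem_prefix_set_iff permutes_inj[OF \<tau>])
    then have "\<sigma> p \<in> prefix_set \<sigma> i" using pre[OF i(3)] eq by simp
    then show False using i by (simp add: mem_prefix_set_iff permutes_inj[OF \<sigma>])
  qed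
qed

lemma run_value_le':
  assumes \<sigma>: "\<sigma> permutes {1..n}" and \<tau>: "\<tau> permutes {1..n}"
    and asc: "ascents n \<sigma> \<subseteq> I" and pre: "\<And>i. i \<in> I \<Longrightarrow> prefix_set \<sigma> i = prefix_set \<tau> i"
    and eq: "\<sigma> q = \<tau> j" and q: "1 \<le> q" "q \<le> j" and j: "j \<le> n"
  shows "\<sigma> j \<le> \<sigma> q"
proof (rule le_of_ascents_disjoint[OF _ q j])
  show "{q..<j} \<inter> ascents n \<sigma> = {}"
  proof (rule ccontr)
    assume "{q..<j} \<inter> ascents n \<sigma> \<noteq> {}"
    then obtain i where "i \<in> {q..<j}" "i \<in> ascents n \<sigma>" by blast
    then have i: "q \<le> i" "i < j" "i \<in> I" using asc by auto
    have "\<sigma> q \<in> prefix_set \<sigma> i" using i q by (simp add: mem_prefix_set_iff permutes_inj[OF \<sigma>])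
    then have "\<tau> j \<in> prefix_set \<tau> i" using pre[OF i(3)] eq by simp
    then show False using i by (simp add: mem_prefix_set_iff permutes_inj[OF \<tau>])
  qed
qed

lemma le_of_prefix_sets_agree_below:
  assumes \<sigma>: "\<sigma> permutes {1..n}" and \<tau>: "\<tau> permutes {1..n}" and asc: "ascents n \<sigma> \<subseteq> I"
    and pre: "\<And>i. i \<in> I \<Longrightarrow> prefix_set \<sigma> i = prefix_set \<tau> i"
    and j: "j \<in> {1..n}" and agree: "\<And>q. q \<in> {1..<j} \<Longrightarrow> \<sigma> q = \<tau> q"
  shows "\<tau> j \<le> \<sigma> j"
proof -
  have "\<tau> j \<in> \<sigma> ` {1..n}"
    unfolding permutes_image[OF \<sigma>] using j permutes_in_image[OF \<tau>] by blast
  then obtain p where p: "p \<in> {1..n}" "\<sigma> p = \<tau> j" by (metis imageE)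
  have "j \<le> p"
  proof (rule ccontr)
    assume "\<not> j \<le> p"
    then have "\<sigma> p = \<tau> p" using p by (intro agree) simp
    then have "p = j" using p(2) by (simp add: injD[OF permutes_inj[OF \<tau>]])
    then show False using \<open>\<not> j \<le> p\<close> by simp
  qed
  then have "\<sigma> p \<le> \<sigma> j" using run_value_le[OF \<sigma> \<tau> asc pre p(2)] j p by simp
  then show ?thesis using p(2) by simp
qed

text \<open>A permutation whose ascents all lie in \<open>I\<close> decreases between consecutive elements
  of \<open>I\<close>, so it is determined by its prefix sets at \<open>I\<close>.\<close>
lemma permutation_eq_of_prefix_sets:
  assumes \<sigma>: "\<sigma> permutes {1..n}" and \<tau>: "\<tau> permutes {1..n}"
    and asc: "ascents n \<sigma> \<subseteq> I" "ascents n \<tau> \<subseteq> I"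
    and pre: "\<And>i. i \<in> I \<Longrightarrow> prefix_set \<sigma> i = prefix_set \<tau> i"
  shows "\<sigma> = \<tau>"
proof -
  have pre': "\<And>i. i \<in> I \<Longrightarrow> prefix_set \<tau> i = prefix_set \<sigma> i" using pre by simp
  have agree: "\<sigma> j = \<tau> j" if "j \<in> {1..n}" for j
    using that
  proof (induction j rule: less_induct)
    case (less j)
    then have "\<And>q. q \<in> {1..<j} \<Longrightarrow> \<sigma> q = \<tau> q" by auto
    then have "\<tau> j \<le> \<sigma> j" and "\<sigma> j \<le> \<tau> j"
      using le_of_prefix_sets_agree_below[OF \<sigma> \<tau> asc(1) pre less.prems]
        le_of_prefix_sets_agree_below[OF \<tau> \<sigma> asc(2) pre' less.prems] by auto
    then show ?case by simp
  qed
  show ?thesis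
  proof (rule ext)
    fix x show "\<sigma> x = \<tau> x"
      using agree permutes_not_in[OF \<sigma>] permutes_not_in[OF \<tau>] by (cases "x \<in> {1..n}") simp_all
  qed
qed

lemma inj_on_ascent_face: "inj_on (\<lambda>w. prefix_set w ` ascents n w) {w. w permutes {1..n}}"
proof (rule inj_onI)
  fix \<sigma> \<tau>
  assume "\<sigma> \<in> {w. w permutes {1..n}}" "\<tau> \<in> {w. w permutes {1..n}}"
    and eq: "prefix_set \<sigma> ` ascents n \<sigma> = prefix_set \<tau> ` ascents n \<tau>"
  then have \<sigma>: "\<sigma> permutes {1..n}" and \<tau>: "\<tau> permutes {1..n}" by auto
  have face: "i \<in> ascents n \<tau> \<and> prefix_set \<sigma> i = prefix_set \<tau> i"
    if \<sigma>: "\<sigma> permutes {1..n}" and \<tau>: "\<tau> permutes {1..n}"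
      and eq: "prefix_set \<sigma> ` ascents n \<sigma> = prefix_set \<tau> ` ascents n \<tau>"
      and i: "i \<in> ascents n \<sigma>" for \<sigma> \<tau> i
  proof -
    have "prefix_set \<sigma> i \<in> prefix_set \<tau> ` ascents n \<tau>"
      using imageI[OF i, of "prefix_set \<sigma>"] unfolding eq .
    then obtain k where k: "k \<in> ascents n \<tau>" "prefix_set \<sigma> i = prefix_set \<tau> k" by (metis imageE)
    then have "i = k"
      using card_prefix_set[OF permutes_inj[OF \<sigma>], of i] card_prefix_set[OF permutes_inj[OF \<tau>], of k]
      by simp
    with k show ?thesis by simp
  qed
  have "ascents n \<sigma> = ascents n \<tau>"
    using face[OF \<sigma> \<tau> eq] face[OF \<tau> \<sigma> eq[symmetric]] by blast
  then show "\<sigma> = \<tau>"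
    using face[OF \<sigma> \<tau> eq] by (intro permutation_eq_of_prefix_sets[OF \<sigma> \<tau>]) auto
qed

definition position_weight :: "nat \<Rightarrow> (nat \<Rightarrow> nat) \<Rightarrow> nat" where
  "position_weight n w = (\<Sum>j\<in>{1..n}. j * w j)"

lemma position_weight_swap:
  assumes "1 \<le> i" and "i < n"
  shows "position_weight n (w \<circ> Transposition.transpose i (Suc i)) + w (Suc i)
    = position_weight n w + w i"
proof -
  define R where "R = {1..n} - {i, Suc i}"
  have R: "{1..n} = insert i (insert (Suc i) R)" "finite R" "i \<notin> R" "Suc i \<notin> R"
    unfolding R_def using assms by auto
  have split: "(\<Sum>j\<in>{1..n}. f j) = f i + f (Suc i) + (\<Sum>j\<in>R. f j)" for f :: "nat \<Rightarrow> nat"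
    by (simp only: R(1)) (simp add: R(2-4))
  have "(\<Sum>j\<in>R. j * (w \<circ> Transposition.transpose i (Suc i)) j) = (\<Sum>j\<in>R. j * w j)"
    unfolding R_def by (intro sum.cong) auto
  then show ?thesis unfolding position_weight_def split by simp
qed

lemma prefix_set_swap:
  assumes "1 \<le> i" and "k \<noteq> i"
  shows "prefix_set (w \<circ> Transposition.transpose i (Suc i)) k = prefix_set w k"
proof -
  have "Transposition.transpose i (Suc i) ` {1..k} = {1..k}"
    using assms by (intro transpose_image_eq) auto
  then show ?thesis unfolding prefix_set_def by (metis image_comp)
qed

text \<open>Swapping the entries at an ascent \<open>i \<notin> I\<close> keeps the prefix sets at \<open>I\<close> and lowers
  the weight, so a weight-minimal permutation with the prefix sets of \<open>w\<close> has no ascents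
  outside \<open>I\<close>.\<close>
lemma ex_permutation_ascents_subset:
  assumes w: "w permutes {1..n}"
  shows "\<exists>\<sigma>. \<sigma> permutes {1..n} \<and> ascents n \<sigma> \<subseteq> I \<and> (\<forall>i\<in>I. prefix_set \<sigma> i = prefix_set w i)"
proof -
  define S where "S = {\<tau>. \<tau> permutes {1..n} \<and> (\<forall>i\<in>I. prefix_set \<tau> i = prefix_set w i)}"
  have "w \<in> S" unfolding S_def using w by simp
  then obtain \<sigma> where \<sigma>S: "\<sigma> \<in> S" and min: "\<And>\<tau>. \<tau> \<in> S \<Longrightarrow> position_weight n \<sigma> \<le> position_weight n \<tau>"
    using ex_has_least_nat[of "\<lambda>\<tau>. \<tau> \<in> S"] by metis
  have "i \<in> I" if i: "i \<in> ascents n \<sigma>" for i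
  proof (rule ccontr)
    assume "i \<notin> I"
    define \<tau> where "\<tau> = \<sigma> \<circ> Transposition.transpose i (Suc i)"
    from i have i: "1 \<le> i" "i < n" "\<sigma> i < \<sigma> (Suc i)" unfolding ascents_def by auto
    have "\<tau> permutes {1..n}"
      unfolding \<tau>_def using i \<sigma>S by (intro permutes_compose permutes_swap_id) (auto simp: S_def)
    moreover have "prefix_set \<tau> k = prefix_set \<sigma> k" if "k \<in> I" for k
      unfolding \<tau>_def using prefix_set_swap i(1) \<open>i \<notin> I\<close> that by metis
    ultimately have "\<tau> \<in> S" using \<sigma>S unfolding S_def by simp
    then have "position_weight n \<sigma> \<le> position_weight n \<tau>" by (rule min)
    then show False using position_weight_swap[OF i(1,2), of \<sigma>] i(3) unfolding \<tau>_def by simp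
  qed
  then show ?thesis using \<sigma>S unfolding S_def by blast
qed

lemma ascents_eq_of_prefix_sets:
  assumes w: "w permutes {1..n}" and \<sigma>: "\<sigma> permutes {1..n}"
    and I: "I \<subseteq> ascents n w" and asc: "ascents n \<sigma> \<subseteq> I"
    and pre: "\<And>i. i \<in> I \<Longrightarrow> prefix_set \<sigma> i = prefix_set w i"
  shows "ascents n \<sigma> = I"
proof
  have inj: "inj \<sigma>" "inj w" using \<sigma> w by (simp_all add: permutes_inj)
  show "I \<subseteq> ascents n \<sigma>"
  proof
    fix i assume "i \<in> I"
    then have i: "1 \<le> i" "i < n" "w i < w (Suc i)" using I unfolding ascents_def by auto
    have "w i \<in> {1..n}" "w (Suc i) \<in> {1..n}"
      using i permutes_in_image[OF w, of i] permutes_in_image[OF w, of "Suc i"] by auto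
    then have "w i \<in> \<sigma> ` {1..n}" "w (Suc i) \<in> \<sigma> ` {1..n}"
      unfolding permutes_image[OF \<sigma>] .
    then obtain q q' where q: "q \<in> {1..n}" "\<sigma> q = w i" and q': "q' \<in> {1..n}" "\<sigma> q' = w (Suc i)"
      by (metis imageE)
    have "\<sigma> q \<in> prefix_set \<sigma> i" using q pre[OF \<open>i \<in> I\<close>] i inj by (simp add: mem_prefix_set_iff)
    then have "q \<le> i" using inj by (simp add: mem_prefix_set_iff)
    then have "\<sigma> i \<le> w i" using run_value_le'[OF \<sigma> w asc pre q(2)] q i by simp
    moreover have "Suc i \<le> q'"
    proof (rule ccontr)
      assume "\<not> Suc i \<le> q'"
      then have "\<sigma> q' \<in> prefix_set \<sigma> i" using q'(1) inj by (simp add: mem_prefix_set_iff)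
      then show False using pre[OF \<open>i \<in> I\<close>] q' inj by (simp add: mem_prefix_set_iff)
    qed
    then have "\<sigma> q' \<le> \<sigma> (Suc i)"
      using q' by (intro run_value_le[OF \<sigma> w asc pre q'(2)]) auto
    ultimately show "i \<in> ascents n \<sigma>" using i q'(2) unfolding ascents_def by simp
  qed
qed (rule asc)

definition ascent_closed :: "nat \<Rightarrow> (nat \<Rightarrow> nat) set \<Rightarrow> bool" where
  "ascent_closed n W \<longleftrightarrow> (\<forall>w\<in>W. \<forall>I\<subseteq>ascents n w.
     \<exists>\<sigma>\<in>W. ascents n \<sigma> = I \<and> (\<forall>i\<in>I. prefix_set \<sigma> i = prefix_set w i))"

lemma ascent_closed_permutations: "ascent_closed n {w. w permutes {1..n}}"
  unfolding ascent_closed_def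
proof (intro ballI allI impI)
  fix w I assume "w \<in> {w. w permutes {1..n}}" and I: "I \<subseteq> ascents n w"
  then have w: "w permutes {1..n}" by simp
  obtain \<sigma> where \<sigma>: "\<sigma> permutes {1..n}" "ascents n \<sigma> \<subseteq> I"
    and pre: "\<forall>i\<in>I. prefix_set \<sigma> i = prefix_set w i"
    using ex_permutation_ascents_subset[OF w] by blast
  then have "ascents n \<sigma> = I" using ascents_eq_of_prefix_sets[OF w \<sigma>(1) I] by simp
  then show "\<exists>\<sigma>\<in>{w. w permutes {1..n}}. ascents n \<sigma> = I \<and> (\<forall>i\<in>I. prefix_set \<sigma> i = prefix_set w i)"
    using \<sigma>(1) pre by blast
qed

lemma ascent_complex_eq_image:
  assumes "ascent_closed n W"
  shows "ascent_complex n W = (\<lambda>w. prefix_set w ` ascents n w) ` W"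
proof
  show "ascent_complex n W \<subseteq> (\<lambda>w. prefix_set w ` ascents n w) ` W"
  proof
    fix F assume "F \<in> ascent_complex n W"
    then obtain w I where F: "F = prefix_set w ` I" and w: "w \<in> W" and I: "I \<subseteq> ascents n w"
      unfolding ascent_complex_def by blast
    then obtain \<sigma> where \<sigma>: "\<sigma> \<in> W" "ascents n \<sigma> = I" "\<forall>i\<in>I. prefix_set \<sigma> i = prefix_set w i"
      using assms unfolding ascent_closed_def by blast
    then have "prefix_set \<sigma> ` ascents n \<sigma> = F" unfolding F by (intro image_cong) simp_all
    then show "F \<in> (\<lambda>w. prefix_set w ` ascents n w) ` W" using \<sigma>(1) by (rule image_eqI[OF sym])
  qed
next
  show "(\<lambda>w. prefix_set w ` ascents n w) ` W \<subseteq> ascent_complex n W"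
    unfolding ascent_complex_def by blast
qed

lemma simplicial_complex'_ascent_complex:
  assumes "W \<subseteq> {w. w permutes {1..n}}" and "W \<noteq> {}" and "ascent_closed n W"
  shows "simplicial_complex' (ascent_complex n W)"
  unfolding simplicial_complex'_def
proof (intro conjI ballI allI impI)
  have "finite W" using assms(1) finite_permutations[of "{1..n}"] by (simp add: finite_subset)
  then show "finite (ascent_complex n W)" by (simp add: ascent_complex_eq_image[OF assms(3)])
  obtain w where "w \<in> W" using assms(2) by blast
  then have "prefix_set w ` {} \<in> ascent_complex n W" unfolding ascent_complex_def by blast
  then show "{} \<in> ascent_complex n W" by simp
next
  fix F assume "F \<in> ascent_complex n W"
  then obtain w I where "F = prefix_set w ` I" "I \<subseteq> ascents n w"
    unfolding ascent_complex_def by blast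
  then show "finite F" using finite_subset[OF _ finite_ascents] by blast
next
  fix F G assume "F \<in> ascent_complex n W" and G: "G \<subseteq> F"
  then obtain w I where F: "F = prefix_set w ` I" and wI: "w \<in> W" "I \<subseteq> ascents n w"
    unfolding ascent_complex_def by blast
  then have "G = prefix_set w ` {i\<in>I. prefix_set w i \<in> G}" using G by blast
  moreover have "{i\<in>I. prefix_set w i \<in> G} \<subseteq> ascents n w" using wI(2) by blast
  ultimately show "G \<in> ascent_complex n W" unfolding ascent_complex_def using wI(1) by blast
qed

lemma f_poly'_ascent_complex:
  assumes "W \<subseteq> {w. w permutes {1..n}}" and "ascent_closed n W"
  shows "f_poly' (ascent_complex n W) = (\<Sum>w\<in>W. monom 1 (card (ascents n w)))"
proof -
  have inj: "inj_on (\<lambda>w. prefix_set w ` ascents n w) W"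
    using inj_on_ascent_face assms(1) by (rule inj_on_subset)
  have "card (prefix_set w ` ascents n w) = card (ascents n w)" if "w \<in> W" for w
  proof (rule card_image, rule inj_onI)
    fix i j assume "prefix_set w i = prefix_set w j"
    moreover have "inj w" using that assms(1) permutes_inj by blast
    ultimately show "i = j" by (metis card_prefix_set)
  qed
  then show ?thesis
    unfolding f_poly'_def ascent_complex_eq_image[OF assms(2)] sum.reindex[OF inj] by simp
qed

lemma ex_simplicial_complex_ascents:
  assumes "W \<subseteq> {w. w permutes {1..n}}" and "W \<noteq> {}" and "ascent_closed n W"
  shows "\<exists>K. simplicial_complex K \<and> f_poly K = (\<Sum>w\<in>W. monom 1 (card (ascents n w)))"
proof -
  have "\<forall>F\<in>ascent_complex n W. \<forall>x\<in>F. finite x"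
    unfolding ascent_complex_def prefix_set_def by auto
  then obtain K where "simplicial_complex K" "f_poly K = f_poly' (ascent_complex n W)"
    using ex_simplicial_complex_f_poly'[OF simplicial_complex'_ascent_complex[OF assms]] by blast
  then show ?thesis using f_poly'_ascent_complex[OF assms(1,3)] by auto
qed


section \<open>Eulerian polynomials\<close>

definition reflect :: "nat \<Rightarrow> nat \<Rightarrow> nat" where
  "reflect n x = (if x \<in> {1..n} then Suc n - x else x)"

lemma reflect_reflect [simp]: "reflect n (reflect n x) = x"
  unfolding reflect_def by auto

lemma reflect_comp_reflect [simp]: "reflect n \<circ> (reflect n \<circ> f) = f"
  by (simp add: fun_eq_iff)

lemma reflect_permutes: "reflect n permutes {1..n}"
proof (rule bij_imp_permutes)
  have "reflect n ` {1..n} \<subseteq> {1..n}" unfolding reflect_def by auto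
  then show "bij_betw (reflect n) {1..n} {1..n}"
    by (intro bij_betw_byWitness[where f' = "reflect n"]) simp_all
next
  show "reflect n x = x" if "x \<notin> {1..n}" for x using that unfolding reflect_def by auto
qed

lemma reflect_less_iff:
  assumes "a \<in> {1..n}" and "b \<in> {1..n}"
  shows "reflect n a < reflect n b \<longleftrightarrow> b < a"
  using assms unfolding reflect_def by auto

lemma ascents_reflect_comp:
  assumes "\<pi> permutes {1..n}"
  shows "ascents n (reflect n \<circ> \<pi>) = {i. 1 \<le> i \<and> i < n \<and> \<pi> i > \<pi> (i + 1)}"
proof (rule set_eqI)
  fix i
  show "i \<in> ascents n (reflect n \<circ> \<pi>) \<longleftrightarrow> i \<in> {i. 1 \<le> i \<and> i < n \<and> \<pi> i > \<pi> (i + 1)}"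
  proof (cases "1 \<le> i \<and> i < n")
    case True
    then have "\<pi> i \<in> {1..n}" "\<pi> (Suc i) \<in> {1..n}"
      using permutes_in_image[OF assms, of i] permutes_in_image[OF assms, of "Suc i"] by auto
    then show ?thesis using True by (simp add: ascents_def reflect_less_iff)
  next
    case False
    then show ?thesis unfolding ascents_def by auto
  qed
qed

lemma eulerian_poly_eq_sum_ascents:
  "eulerian_poly n = (\<Sum>w\<in>{w. w permutes {1..n}}. monom 1 (card (ascents n w)))"
proof -
  have "(\<Sum>w\<in>{w. w permutes {1..n}}. monom 1 (card (ascents n w)))
      = (\<Sum>\<pi>\<in>{w. w permutes {1..n}}. monom 1 (card (ascents n (reflect n \<circ> \<pi>))))"
    by (rule sum.reindex_bij_witness[of _ "(\<circ>) (reflect n)" "(\<circ>) (reflect n)"])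
      (simp_all add: fun_eq_iff permutes_compose[OF _ reflect_permutes] del: One_nat_def)
      \<comment> \<open>\<open>One_nat_def\<close> would turn \<open>{1..n}\<close> into \<open>{Suc 0..n}\<close>, blocking \<open>reflect_permutes\<close>\<close>
  also have "\<dots> = eulerian_poly n"
    unfolding eulerian_poly_def des_def by (intro sum.cong refl) (simp add: ascents_reflect_comp)
  finally show ?thesis by simp
qed

theorem eulerian_poly_is_f_poly:
  "\<exists>K. simplicial_complex K \<and> f_poly K = eulerian_poly n"
proof -
  have "{w. w permutes {1..n}} \<noteq> {}" using permutes_id by blast
  then show ?thesis
    unfolding eulerian_poly_eq_sum_ascents
    by (rule ex_simplicial_complex_ascents[OF subset_refl _ ascent_closed_permutations])
qed

section \<open>Foata's fundamental transformation and derangements\<close>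

definition is_record :: "nat \<Rightarrow> (nat \<Rightarrow> nat) \<Rightarrow> nat \<Rightarrow> bool" where
  "is_record n w p \<longleftrightarrow> 1 \<le> p \<and> p \<le> n \<and> (\<forall>q. 1 \<le> q \<longrightarrow> q < p \<longrightarrow> w q < w p)"

definition run_start :: "nat \<Rightarrow> (nat \<Rightarrow> nat) \<Rightarrow> nat \<Rightarrow> nat" where
  "run_start n w p = Max {q. 1 \<le> q \<and> q \<le> p \<and> is_record n w q}"

text \<open>The records (left-to-right maxima) of \<open>w\<close> cut \<open>1..n\<close> into runs. \<open>run_succ n w\<close> moves
  each position to the next one in its run and the last one back to the record, so the cycles of
  \<open>foata n w\<close> are the runs of \<open>w\<close> read as sequences of values (Foata's fundamental
  transformation).\<close>
definition run_succ :: "nat \<Rightarrow> (nat \<Rightarrow> nat) \<Rightarrow> nat \<Rightarrow> nat" where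
  "run_succ n w p = (if p \<in> {1..n} then
     (if p < n \<and> \<not> is_record n w (Suc p) then Suc p else run_start n w p) else p)"

definition foata :: "nat \<Rightarrow> (nat \<Rightarrow> nat) \<Rightarrow> nat \<Rightarrow> nat" where
  "foata n w = w \<circ> run_succ n w \<circ> inv w"

definition nonsingleton_runs :: "nat \<Rightarrow> (nat \<Rightarrow> nat) \<Rightarrow> bool" where
  "nonsingleton_runs n w \<longleftrightarrow> (\<forall>p. is_record n w p \<longrightarrow> p < n \<and> \<not> is_record n w (Suc p))"

lemma is_record_1: "1 \<le> n \<Longrightarrow> is_record n w 1"
  unfolding is_record_def by auto

lemma finite_records_le: "finite {q. 1 \<le> q \<and> q \<le> p \<and> is_record n w q}"
  by (rule finite_subset[of _ "{..p}"]) auto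

lemma run_start:
  assumes "p \<in> {1..n}"
  shows "is_record n w (run_start n w p)" and "run_start n w p \<in> {1..p}"
proof -
  let ?S = "{q. 1 \<le> q \<and> q \<le> p \<and> is_record n w q}"
  have "1 \<in> ?S" using assms is_record_1[of n w] by simp
  then have "run_start n w p \<in> ?S"
    unfolding run_start_def using finite_records_le by (intro Max_in) auto
  then show "is_record n w (run_start n w p)" and "run_start n w p \<in> {1..p}" by auto
qed

lemma run_start_ge:
  assumes "1 \<le> q" and "q \<le> p" and "is_record n w q"
  shows "q \<le> run_start n w p"
  unfolding run_start_def using assms finite_records_le by (intro Max_ge) auto

lemma run_start_record:
  assumes "is_record n w p"
  shows "run_start n w p = p"
proof -
  have p: "p \<in> {1..n}" using assms unfolding is_record_def by simp
  have "p \<le> run_start n w p" using p assms by (intro run_start_ge) auto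
  moreover have "run_start n w p \<le> p" using run_start(2)[OF p] by simp
  ultimately show ?thesis by simp
qed

lemma run_start_Suc:
  assumes "\<not> is_record n w (Suc p)"
  shows "run_start n w (Suc p) = run_start n w p"
proof -
  have "{q. 1 \<le> q \<and> q \<le> Suc p \<and> is_record n w q} = {q. 1 \<le> q \<and> q \<le> p \<and> is_record n w q}"
    using assms le_Suc_eq by auto
  then show ?thesis unfolding run_start_def by simp
qed

lemma le_run_start_value:
  assumes "p \<in> {1..n}" and "t \<in> {1..p}"
  shows "w t \<le> w (run_start n w p)"
  using assms
proof (induction p arbitrary: t)
  case (Suc p)
  show ?case
  proof (cases "is_record n w (Suc p)")
    case True
    then show ?thesis
      using Suc.prems unfolding run_start_record[OF True] is_record_def
      by (cases "t = Suc p") auto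
  next
    case False
    then have "p \<in> {1..n}" using Suc.prems is_record_1[of n w] by (cases p) auto
    then have IH: "w s \<le> w (run_start n w p)" if "s \<in> {1..p}" for s
      using Suc.IH that by blast
    from False obtain q where "1 \<le> q" "q < Suc p" "\<not> w q < w (Suc p)"
      using Suc.prems unfolding is_record_def by auto
    then have "w (Suc p) \<le> w (run_start n w p)" using IH[of q] by simp
    then show ?thesis
      using IH Suc.prems unfolding run_start_Suc[OF False] by (cases "t = Suc p") auto
  qed
qed simp

lemma run_succ_in: "p \<in> {1..n} \<Longrightarrow> run_succ n w p \<in> {1..n}"
  using run_start(2)[of p n w] unfolding run_succ_def by auto

lemma run_start_run_succ:
  assumes "p \<in> {1..n}"
  shows "run_start n w (run_succ n w p) = run_start n w p"
proof (cases "p < n \<and> \<not> is_record n w (Suc p)")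
  case True
  then show ?thesis using assms run_start_Suc unfolding run_succ_def by simp
next
  case False
  then show ?thesis
    using assms run_start_record[OF run_start(1)[OF assms]] unfolding run_succ_def by auto
qed

lemma is_record_run_succ_iff:
  assumes "p \<in> {1..n}"
  shows "is_record n w (run_succ n w p) \<longleftrightarrow> p = n \<or> is_record n w (Suc p)"
proof (cases "p < n \<and> \<not> is_record n w (Suc p)")
  case True
  then show ?thesis using assms unfolding run_succ_def by simp
next
  case False
  then show ?thesis using assms run_start(1)[OF assms] unfolding run_succ_def by auto
qed

lemma inj_on_run_succ: "inj_on (run_succ n w) {1..n}"
proof (rule inj_onI)
  fix p q assume p: "p \<in> {1..n}" and q: "q \<in> {1..n}" and eq: "run_succ n w p = run_succ n w q"
  show "p = q"
  proof (cases "p = n \<or> is_record n w (Suc p)")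
    case True
    then have "q = n \<or> is_record n w (Suc q)"
      using is_record_run_succ_iff[OF p, of w] is_record_run_succ_iff[OF q, of w] eq by simp
    have end_le: "a \<le> b"
      if "a \<in> {1..n}" "b \<in> {1..n}" "b = n \<or> is_record n w (Suc b)"
        "run_start n w a = run_start n w b" for a b
    proof (rule ccontr)
      assume "\<not> a \<le> b"
      then have "is_record n w (Suc b)" using that by auto
      then have "Suc b \<le> run_start n w a" using \<open>\<not> a \<le> b\<close> by (intro run_start_ge) auto
      then show False using that run_start(2)[OF that(2), of w] by simp
    qed
    have "run_start n w p = run_start n w q"
      using eq True \<open>q = n \<or> is_record n w (Suc q)\<close> p q unfolding run_succ_def by auto
    then show ?thesis
      using end_le[OF p q \<open>q = n \<or> _\<close>] end_le[OF q p True] by simp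
  next
    case False
    then have "\<not> (q = n \<or> is_record n w (Suc q))"
      using is_record_run_succ_iff[OF p, of w] is_record_run_succ_iff[OF q, of w] eq by simp
    then show ?thesis using eq False p q unfolding run_succ_def by auto
  qed
qed

lemma run_succ_permutes: "run_succ n w permutes {1..n}"
proof (rule bij_imp_permutes)
  have "run_succ n w ` {1..n} \<subseteq> {1..n}" using run_succ_in by blast
  then have "run_succ n w ` {1..n} = {1..n}" using endo_inj_surj[OF _ _ inj_on_run_succ] by simp
  then show "bij_betw (run_succ n w) {1..n} {1..n}" using inj_on_run_succ unfolding bij_betw_def by simp
next
  show "run_succ n w x = x" if "x \<notin> {1..n}" for x using that unfolding run_succ_def by auto
qed

lemma foata_permutes: "w permutes {1..n} \<Longrightarrow> foata n w permutes {1..n}"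
  unfolding foata_def by (intro permutes_compose permutes_inv run_succ_permutes)

lemma foata_apply: "w permutes S \<Longrightarrow> foata n w (w p) = w (run_succ n w p)"
  unfolding foata_def by (simp add: permutes_inverses(2))

lemma foata_iterate_run_start:
  assumes w: "w permutes {1..n}" and p: "p \<in> {1..n}"
  shows "\<exists>j. (foata n w ^^ j) (w p) = w (run_start n w p)"
proof -
  have "p \<le> n" using p by simp
  then show ?thesis using p
  proof (induction p rule: inc_induct)
    case base
    then have "(foata n w ^^ 1) (w n) = w (run_start n w n)"
      using foata_apply[OF w] unfolding run_succ_def by simp
    then show ?case ..
  next
    case (step p)
    show ?case
    proof (cases "is_record n w (Suc p)")
      case True
      then have "(foata n w ^^ 1) (w p) = w (run_start n w p)"
        using step foata_apply[OF w] unfolding run_succ_def by simp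
      then show ?thesis ..
    next
      case False
      then have "foata n w (w p) = w (Suc p)"
        using step foata_apply[OF w] unfolding run_succ_def by simp
      moreover obtain j where "(foata n w ^^ j) (w (Suc p)) = w (run_start n w (Suc p))"
        using step by auto
      ultimately have "(foata n w ^^ Suc j) (w p) = w (run_start n w p)"
        unfolding funpow_Suc_right comp_apply run_start_Suc[OF False] by simp
      then show ?thesis ..
    qed
  qed
qed

lemma foata_iterate_same_run:
  assumes w: "w permutes {1..n}" and r: "r \<in> {1..n}"
  shows "\<exists>r'\<in>{1..n}. run_start n w r' = run_start n w r \<and> (foata n w ^^ j) (w r) = w r'"
proof (induction j)
  case 0
  show ?case using r by auto
next
  case (Suc j)
  then obtain r' where r': "r' \<in> {1..n}" "run_start n w r' = run_start n w r"
    "(foata n w ^^ j) (w r) = w r'" by blast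
  then have "(foata n w ^^ Suc j) (w r) = w (run_succ n w r')" using foata_apply[OF w] by simp
  moreover have "run_start n w (run_succ n w r') = run_start n w r"
    using r' run_start_run_succ[OF r'(1)] by simp
  ultimately show ?case using run_succ_in[OF r'(1)] by (intro bexI[of _ "run_succ n w r'"]) simp_all
qed

text \<open>The cycle of \<open>foata n w'\<close> through \<open>w' p\<close> is the run of \<open>w'\<close> starting at the record \<open>p\<close>,
  so its values are at most \<open>w' p\<close>; following the same cycle as a cycle of \<open>foata n w\<close> leads to
  the start of a run of \<open>w\<close> at or after \<open>p\<close>, whose value is at least \<open>w p\<close>.\<close>
lemma foata_record_value_le:
  assumes w: "w permutes {1..n}" and w': "w' permutes {1..n}" and eq: "foata n w = foata n w'"
    and p: "p \<in> {1..n}" and rec: "is_record n w p" and rec': "is_record n w' p"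
    and agree: "\<And>q. q \<in> {1..<p} \<Longrightarrow> w q = w' q"
  shows "w p \<le> w' p"
proof -
  have "w' p \<in> w ` {1..n}"
    unfolding permutes_image[OF w] using permutes_in_image[OF w', of p] p by simp
  then obtain q where q: "q \<in> {1..n}" "w q = w' p" by (metis imageE)
  have "p \<le> q"
  proof (rule ccontr)
    assume "\<not> p \<le> q"
    then have "w' q = w' p" using agree[of q] q by simp
    then show False using injD[OF permutes_inj[OF w']] \<open>\<not> p \<le> q\<close> by blast
  qed
  then have "p \<le> run_start n w q" using p rec by (intro run_start_ge) auto
  then have "w p \<le> w (run_start n w q)"
    using run_start(1)[OF q(1), of w] p unfolding is_record_def by (cases "p = run_start n w q") auto
  moreover obtain j where "(foata n w ^^ j) (w q) = w (run_start n w q)"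
    using foata_iterate_run_start[OF w q(1)] by blast
  moreover obtain r where r: "r \<in> {1..n}" "run_start n w' r = run_start n w' p"
    "(foata n w' ^^ j) (w' p) = w' r"
    using foata_iterate_same_run[OF w' p] by blast
  moreover have "w' r \<le> w' p"
    using le_run_start_value[OF r(1), of r w'] r(1,2) run_start_record[OF rec'] by simp
  ultimately show ?thesis using eq q(2) by simp
qed

lemma is_record_cong:
  assumes "\<And>q. q \<in> {1..p} \<Longrightarrow> w q = w' q"
  shows "is_record n w p \<longleftrightarrow> is_record n w' p"
  using assms unfolding is_record_def by auto

lemma run_start_cong:
  assumes "\<And>q. q \<in> {1..m} \<Longrightarrow> w q = w' q"
  shows "run_start n w m = run_start n w' m"
proof -
  have "is_record n w q \<longleftrightarrow> is_record n w' q" if "q \<le> m" for q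
    using that assms by (intro is_record_cong) auto
  then have "{q. 1 \<le> q \<and> q \<le> m \<and> is_record n w q} = {q. 1 \<le> q \<and> q \<le> m \<and> is_record n w' q}"
    by blast
  then show ?thesis unfolding run_start_def by simp
qed

lemma foata_eq_agree_step:
  assumes w: "w permutes {1..n}" and w': "w' permutes {1..n}" and eq: "foata n w = foata n w'"
    and p: "p \<in> {1..n}" and agree: "\<And>q. q \<in> {1..<p} \<Longrightarrow> w q = w' q"
  shows "w p = w' p"
proof -
  have agree': "\<And>q. q \<in> {1..<p} \<Longrightarrow> w' q = w q" using agree by simp
  have records: "w p = w' p" if "is_record n w p" "is_record n w' p"
    using foata_record_value_le[OF w w' eq p that agree]
      foata_record_value_le[OF w' w eq[symmetric] p that(2,1) agree'] by simp
  show ?thesis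
  proof (cases "p = 1")
    case True
    then show ?thesis using p is_record_1 records by simp
  next
    case False
    define m where "m = p - 1"
    have m: "m \<in> {1..n}" "Suc m = p" using False p unfolding m_def by auto
    have agree_m: "\<And>q. q \<in> {1..m} \<Longrightarrow> w q = w' q" using agree m by auto
    define s where "s = run_start n w m"
    have s: "s \<in> {1..m}" "w s = w' s" unfolding s_def using run_start(2)[OF m(1)] agree_m by auto
    have start: "run_start n w m = run_start n w' m" using agree_m by (rule run_start_cong)
    have "w (run_succ n w m) = w' (run_succ n w' m)"
      using foata_apply[OF w, of n m] foata_apply[OF w', of n m] eq agree_m[of m] m by simp
    moreover have "run_succ n w m = (if is_record n w p then s else p)"
      and "run_succ n w' m = (if is_record n w' p then s else p)"
      using m p start unfolding run_succ_def s_def by auto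
    moreover have "s \<noteq> p" using s(1) m(2) by auto
    ultimately show ?thesis
      using records s(2) injD[OF permutes_inj[OF w]] injD[OF permutes_inj[OF w']]
      by (cases "is_record n w p"; cases "is_record n w' p") metis+
  qed
qed

lemma inj_on_foata: "inj_on (foata n) {w. w permutes {1..n}}"
proof (rule inj_onI)
  fix w w' assume "w \<in> {w. w permutes {1..n}}" "w' \<in> {w. w permutes {1..n}}"
    and eq: "foata n w = foata n w'"
  then have w: "w permutes {1..n}" and w': "w' permutes {1..n}" by auto
  have agree: "w p = w' p" if "p \<in> {1..n}" for p
    using that
  proof (induction p rule: less_induct)
    case (less p)
    then show ?case by (intro foata_eq_agree_step[OF w w' eq less.prems] less.IH) auto
  qed
  show "w = w'"
  proof (rule ext)
    fix x show "w x = w' x"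
      using agree permutes_not_in[OF w] permutes_not_in[OF w'] by (cases "x \<in> {1..n}") simp_all
  qed
qed

lemma bij_betw_foata: "bij_betw (foata n) {w. w permutes {1..n}} {w. w permutes {1..n}}"
proof -
  have "foata n ` {w. w permutes {1..n}} = {w. w permutes {1..n}}"
    using finite_permutations[of "{1..n}"] foata_permutes inj_on_foata
    by (intro endo_inj_surj) auto
  then show ?thesis using inj_on_foata unfolding bij_betw_def by simp
qed

lemma run_succ_eq_self_iff:
  assumes "p \<in> {1..n}"
  shows "run_succ n w p = p \<longleftrightarrow> is_record n w p \<and> (p = n \<or> is_record n w (Suc p))"
proof (cases "p < n \<and> \<not> is_record n w (Suc p)")
  case True
  then show ?thesis using assms unfolding run_succ_def by simp
next
  case False
  have "run_start n w p = p \<longleftrightarrow> is_record n w p"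
    using run_start(1)[OF assms] run_start_record by metis
  then show ?thesis using False assms unfolding run_succ_def by auto
qed

lemma foata_derangement_iff:
  assumes w: "w permutes {1..n}"
  shows "(\<forall>i\<in>{1..n}. foata n w i \<noteq> i) \<longleftrightarrow> nonsingleton_runs n w"
proof -
  have "(\<forall>i\<in>{1..n}. foata n w i \<noteq> i) \<longleftrightarrow> (\<forall>i\<in>w ` {1..n}. foata n w i \<noteq> i)"
    unfolding permutes_image[OF w] ..
  also have "\<dots> \<longleftrightarrow> (\<forall>p\<in>{1..n}. run_succ n w p \<noteq> p)"
    unfolding ball_simps(9) foata_apply[OF w] using permutes_inj[OF w] by (simp add: inj_eq)
  also have "\<dots> \<longleftrightarrow> nonsingleton_runs n w"
    using run_succ_eq_self_iff unfolding nonsingleton_runs_def is_record_def by auto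
  finally show ?thesis .
qed

lemma ascending_run_succ:
  assumes w: "w permutes {1..n}" and runs: "nonsingleton_runs n w" and n: "1 \<le> n"
  shows "{p\<in>{1..n}. w p < w (run_succ n w p)} = insert n (ascents n w)"
proof (rule set_eqI)
  fix p
  show "p \<in> {p\<in>{1..n}. w p < w (run_succ n w p)} \<longleftrightarrow> p \<in> insert n (ascents n w)"
  proof (cases "p \<in> {1..n}")
    case False
    then show ?thesis using n ascents_subset[of n w] by auto
  next
    case p: True
    show ?thesis
    proof (cases "p < n \<and> \<not> is_record n w (Suc p)")
      case True
      then show ?thesis using p unfolding run_succ_def ascents_def by auto
    next
      case False
      then have run_end: "p = n \<or> is_record n w (Suc p)" using p by auto
      have "run_start n w p \<noteq> p"
        using run_start(1)[OF p, of w] runs run_end unfolding nonsingleton_runs_def by force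
      then have "w p < w (run_start n w p)"
        using le_run_start_value[OF p, of p w] p injD[OF permutes_inj[OF w]]
        by (metis atLeastAtMost_iff order.not_eq_order_implies_strict order_refl)
      moreover have "p \<in> insert n (ascents n w)"
        using run_end p unfolding is_record_def ascents_def by auto
      ultimately show ?thesis using p False unfolding run_succ_def by auto
    qed
  qed
qed

lemma exc_foata:
  assumes w: "w permutes {1..n}" and runs: "nonsingleton_runs n w" and n: "1 \<le> n"
  shows "exc n (foata n w) = card (ascents n w) + 1"
proof -
  have "{i\<in>{1..n}. foata n w i > i} = w ` {p\<in>{1..n}. w p < w (run_succ n w p)}"
  proof (rule set_eqI)
    fix i
    have "i \<in> {1..n} \<longleftrightarrow> i \<in> w ` {1..n}" unfolding permutes_image[OF w] ..
    then show "i \<in> {i\<in>{1..n}. foata n w i > i} \<longleftrightarrow> i \<in> w ` {p\<in>{1..n}. w p < w (run_succ n w p)}"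
      using foata_apply[OF w] by auto
  qed
  then have "exc n (foata n w) = card {p\<in>{1..n}. w p < w (run_succ n w p)}"
    unfolding exc_def using permutes_inj_on[OF w] by (simp add: card_image)
  also have "\<dots> = card (ascents n w) + 1"
    unfolding ascending_run_succ[OF assms] using ascents_subset[of n w] by (subst card_insert_disjoint) auto
  finally show ?thesis .
qed

lemma card_derangements_exc:
  assumes n: "1 \<le> n"
  shows "card {\<pi>. \<pi> permutes {1..n} \<and> (\<forall>i\<in>{1..n}. \<pi> i \<noteq> i) \<and> exc n \<pi> = k + 1}
    = card {w. w permutes {1..n} \<and> nonsingleton_runs n w \<and> card (ascents n w) = k}"
    (is "card ?D = card ?W")
proof -
  have "?D = foata n ` ?W"
  proof
    show "foata n ` ?W \<subseteq> ?D"
    proof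
      fix \<pi> assume "\<pi> \<in> foata n ` ?W"
      then obtain w where "\<pi> = foata n w" and "w \<in> ?W" by (rule imageE)
      then have w: "w permutes {1..n}" "nonsingleton_runs n w" "card (ascents n w) = k"
        and \<pi>: "\<pi> = foata n w" by simp_all
      have "\<forall>i\<in>{1..n}. \<pi> i \<noteq> i" using foata_derangement_iff[OF w(1)] w(2) \<pi> by simp
      moreover have "exc n \<pi> = k + 1" using exc_foata[OF w(1,2) n] w(3) \<pi> by simp
      ultimately show "\<pi> \<in> ?D" using foata_permutes[OF w(1)] \<pi> by simp
    qed
  next
    show "?D \<subseteq> foata n ` ?W"
    proof
      fix \<pi> assume \<pi>: "\<pi> \<in> ?D"
      then have "\<pi> \<in> foata n ` {w. w permutes {1..n}}"
        using bij_betw_imp_surj_on[OF bij_betw_foata] by simp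
      then obtain w where "\<pi> = foata n w" and "w \<in> {w. w permutes {1..n}}" by (rule imageE)
      then have w: "w permutes {1..n}" "\<pi> = foata n w" by simp_all
      then have "nonsingleton_runs n w" using foata_derangement_iff \<pi> by simp
      moreover from this have "card (ascents n w) = k" using exc_foata[OF w(1) _ n] \<pi> w(2) by simp
      ultimately show "\<pi> \<in> foata n ` ?W" using w by blast
    qed
  qed
  moreover have "inj_on (foata n) ?W" using inj_on_foata by (rule inj_on_subset) blast
  ultimately show ?thesis by (simp add: card_image)
qed

lemma prefix_set_Suc: "prefix_set w (Suc i) = insert (w (Suc i)) (prefix_set w i)"
  unfolding prefix_set_def by (simp add: atLeastAtMostSuc_conv)

lemma prefix_set_n: "w permutes {1..n} \<Longrightarrow> prefix_set w n = {1..n}"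
  unfolding prefix_set_def by (rule permutes_image)

lemma is_record_Suc_iff:
  "is_record n w (Suc i) \<longleftrightarrow> Suc i \<le> n \<and> (\<forall>x\<in>prefix_set w i. x < w (Suc i))"
  unfolding is_record_def prefix_set_def by (auto simp: less_Suc_eq_le)

lemma ascent_before_record: "is_record n w (Suc i) \<Longrightarrow> 1 \<le> i \<Longrightarrow> i \<in> ascents n w"
  unfolding is_record_def ascents_def by auto

lemma is_record_Suc_of_ascent:
  assumes "is_record n w p" and "p \<in> ascents n w"
  shows "is_record n w (Suc p)"
  using assms unfolding is_record_def ascents_def by (auto simp: less_Suc_eq)

lemma eq_of_prefix_set_Suc_eq:
  assumes "inj \<sigma>" and "inj w" and "prefix_set \<sigma> i = prefix_set w i"
    and "prefix_set \<sigma> (Suc i) = prefix_set w (Suc i)"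
  shows "\<sigma> (Suc i) = w (Suc i)"
proof -
  have "\<sigma> (Suc i) \<notin> prefix_set \<sigma> i" "w (Suc i) \<notin> prefix_set w i"
    using assms(1,2) by (simp_all add: mem_prefix_set_iff)
  then show ?thesis using assms(3,4) unfolding prefix_set_Suc by auto
qed

text \<open>If \<open>p\<close> were a record of \<open>\<sigma>\<close> ending its run, both \<open>p - 1\<close> (when \<open>p > 1\<close>) and \<open>p\<close>
  (when \<open>p < n\<close>) would be ascents of \<open>\<sigma>\<close>, so \<open>\<sigma>\<close> and \<open>w\<close> would agree in position \<open>p\<close>,
  making \<open>p\<close> a record of \<open>w\<close> that ends a run of \<open>w\<close> as well.\<close>
lemma nonsingleton_runs_of_prefix_sets:
  assumes w: "w permutes {1..n}" and \<sigma>: "\<sigma> permutes {1..n}" and runs: "nonsingleton_runs n w"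
    and I: "I \<subseteq> ascents n w" and asc: "ascents n \<sigma> = I"
    and pre: "\<forall>i\<in>I. prefix_set \<sigma> i = prefix_set w i"
  shows "nonsingleton_runs n \<sigma>"
  unfolding nonsingleton_runs_def
proof (intro allI impI)
  fix p assume rec: "is_record n \<sigma> p"
  then obtain i where p: "p = Suc i" "Suc i \<le> n" unfolding is_record_def by (cases p) auto
  show "p < n \<and> \<not> is_record n \<sigma> (Suc p)"
  proof (rule ccontr)
    assume "\<not> (p < n \<and> \<not> is_record n \<sigma> (Suc p))"
    then have run_end: "Suc i = n \<or> is_record n \<sigma> (Suc (Suc i))" using p by auto
    have pre_i: "prefix_set \<sigma> i = prefix_set w i"
    proof (cases "i = 0")
      case False
      then show ?thesis using ascent_before_record[OF rec[unfolded p]] pre asc by simp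
    qed (simp add: prefix_set_def)
    have pre_Suc: "prefix_set \<sigma> (Suc i) = prefix_set w (Suc i)"
    proof (cases "Suc i = n")
      case False
      then show ?thesis using ascent_before_record[of n \<sigma> "Suc i"] run_end pre asc by simp
    qed (simp add: prefix_set_n[OF \<sigma>] prefix_set_n[OF w])
    have "\<sigma> (Suc i) = w (Suc i)"
      using eq_of_prefix_set_Suc_eq[OF permutes_inj[OF \<sigma>] permutes_inj[OF w] pre_i pre_Suc] .
    then have rec_w: "is_record n w (Suc i)"
      using rec pre_i unfolding p is_record_Suc_iff by simp
    then have "Suc i < n" and not_rec: "\<not> is_record n w (Suc (Suc i))"
      using runs unfolding nonsingleton_runs_def by auto
    then have "Suc i \<in> ascents n w"
      using ascent_before_record[of n \<sigma> "Suc i"] run_end I asc by auto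
    then show False using is_record_Suc_of_ascent[OF rec_w] not_rec by simp
  qed
qed

lemma ascent_closed_nonsingleton_runs:
  "ascent_closed n {w. w permutes {1..n} \<and> nonsingleton_runs n w}"
  unfolding ascent_closed_def
proof (intro ballI allI impI)
  fix w I assume "w \<in> {w. w permutes {1..n} \<and> nonsingleton_runs n w}" and I: "I \<subseteq> ascents n w"
  then have w: "w permutes {1..n}" and runs: "nonsingleton_runs n w" by auto
  obtain \<sigma> where \<sigma>: "\<sigma> \<in> {w. w permutes {1..n}}" "ascents n \<sigma> = I"
    and pre: "\<forall>i\<in>I. prefix_set \<sigma> i = prefix_set w i"
    using ascent_closed_permutations w I unfolding ascent_closed_def by blast
  then have "nonsingleton_runs n \<sigma>" using nonsingleton_runs_of_prefix_sets[OF w _ runs I] by simp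
  then show "\<exists>\<sigma>\<in>{w. w permutes {1..n} \<and> nonsingleton_runs n w}. ascents n \<sigma> = I \<and>
      (\<forall>i\<in>I. prefix_set \<sigma> i = prefix_set w i)"
    using \<sigma> pre by blast
qed

lemma nonsingleton_runs_transpose:
  assumes "2 \<le> n"
  shows "nonsingleton_runs n (Transposition.transpose 1 n)"
  unfolding nonsingleton_runs_def
proof (intro allI impI)
  have first: "p = 1" if "is_record n (Transposition.transpose 1 n) p" for p
    using that assms unfolding is_record_def by (cases "p = 1"; cases "p = n") auto
  fix p assume "is_record n (Transposition.transpose 1 n) p"
  then have "p = 1" by (rule first)
  moreover have "\<not> is_record n (Transposition.transpose 1 n) (Suc 1)" using first by force
  ultimately show "p < n \<and> \<not> is_record n (Transposition.transpose 1 n) (Suc p)"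
    using assms by simp
qed

theorem derangement_poly_is_f_poly:
  assumes "1 \<le> d"
  shows "\<exists>K. simplicial_complex K \<and> f_poly K = derangement_poly d"
proof -
  define n where "n = Suc d"
  define W where "W = {w. w permutes {1..n} \<and> nonsingleton_runs n w}"
  have "Transposition.transpose 1 n \<in> W"
    unfolding W_def n_def using assms nonsingleton_runs_transpose by (auto intro: permutes_swap_id)
  then obtain K where K: "simplicial_complex K" "f_poly K = (\<Sum>w\<in>W. monom 1 (card (ascents n w)))"
    using ex_simplicial_complex_ascents[of W n] ascent_closed_nonsingleton_runs unfolding W_def by blast
  have "finite W" unfolding W_def using finite_permutations[of "{1..n}"] by (simp add: finite_subset)
  then have "(\<Sum>w\<in>W. monom 1 (card (ascents n w))) = (\<Sum>k\<le>d. monom (card {w\<in>W. card (ascents n w) = k}) k)"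
    using card_ascents_le[of n] unfolding n_def by (intro sum_monom_1_group) auto
  also have "\<dots> = derangement_poly d"
    unfolding derangement_poly_def derangement_num_def W_def
    using card_derangements_exc[of n] unfolding n_def by (simp add: conj_assoc)
  finally show ?thesis using K by auto
qed

section \<open>Partial partitions and Stirling numbers\<close>

definition partial_partitions :: "'a set \<Rightarrow> 'a set set set" where
  "partial_partitions A = {P. disjoint P \<and> {} \<notin> P \<and> \<Union>P \<subseteq> A}"

lemma partial_partitions_subset_Pow: "partial_partitions A \<subseteq> Pow (Pow A)"
  unfolding partial_partitions_def by auto

lemma finite_partial_partitions: "finite A \<Longrightarrow> finite (partial_partitions A)"
  using partial_partitions_subset_Pow by (rule finite_subset) simp

lemma finite_partial_partition:
  assumes "finite A" and "P \<in> partial_partitions A"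
  shows "finite P"
proof -
  have "P \<subseteq> Pow A" using subsetD[OF partial_partitions_subset_Pow assms(2)] by (rule PowD)
  then show ?thesis using assms(1) by (simp add: finite_subset)
qed

lemma card_partial_partition_le:
  assumes "finite A" and P: "P \<in> partial_partitions A"
  shows "card P \<le> card A"
proof -
  have blocks: "B \<noteq> {}" "B \<subseteq> A" if "B \<in> P" for B
    using P that unfolding partial_partitions_def by auto
  have "inj_on (\<lambda>B. SOME x. x \<in> B) P"
  proof (rule inj_onI)
    fix B C assume "B \<in> P" "C \<in> P" and eq: "(SOME x. x \<in> B) = (SOME x. x \<in> C)"
    have "(SOME x. x \<in> B) \<in> B" "(SOME x. x \<in> C) \<in> C"
      using blocks(1) \<open>B \<in> P\<close> \<open>C \<in> P\<close> by (simp_all add: some_in_eq)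
    then have "(SOME x. x \<in> B) \<in> B \<inter> C" using eq by simp
    then show "B = C" using \<open>B \<in> P\<close> \<open>C \<in> P\<close> P unfolding partial_partitions_def disjoint_def by blast
  qed
  moreover have "(\<lambda>B. SOME x. x \<in> B) ` P \<subseteq> A" using blocks some_in_eq by blast
  ultimately show ?thesis using assms(1) by (rule card_inj_on_le)
qed

lemma simplicial_complex'_partial_partitions:
  assumes "finite A"
  shows "simplicial_complex' (partial_partitions A)"
  unfolding simplicial_complex'_def
proof (intro conjI ballI allI impI)
  show "finite (partial_partitions A)" using assms by (rule finite_partial_partitions)
  show "{} \<in> partial_partitions A" unfolding partial_partitions_def by simp
next
  fix P assume "P \<in> partial_partitions A"
  then show "finite P" using assms finite_partial_partition by blast
next
  fix P Q assume "P \<in> partial_partitions A" and "Q \<subseteq> P"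
  then show "Q \<in> partial_partitions A"
    unfolding partial_partitions_def using pairwise_subset[of disjnt P Q] by auto
qed

lemma disjoint_insert_block:
  assumes "disjoint Q" and "X \<inter> \<Union>Q = {}"
  shows "disjoint (insert X Q)"
proof (rule disjointI)
  fix B C assume "B \<in> insert X Q" "C \<in> insert X Q" "B \<noteq> C"
  then consider "B = X" "C \<in> Q" | "C = X" "B \<in> Q" | "B \<in> Q" "C \<in> Q" by blast
  then show "B \<inter> C = {}"
  proof cases
    case 3
    then show ?thesis using disjointD[OF assms(1)] \<open>B \<noteq> C\<close> by blast
  qed (use assms(2) in blast)+
qed

lemma partial_partitions_avoiding:
  assumes "a \<notin> A"
  shows "{P \<in> partial_partitions (insert a A). a \<notin> \<Union>P} = partial_partitions A"
  using assms unfolding partial_partitions_def by auto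

lemma card_partial_partitions_singleton_block:
  assumes A: "finite A" "a \<notin> A"
  shows "card {P \<in> partial_partitions (insert a A). card P = Suc k \<and> {a} \<in> P}
    = card {Q \<in> partial_partitions A. card Q = k}" (is "card ?L = card ?R")
proof -
  have remove: "P - {{a}} \<in> ?R" if "P \<in> ?L" for P
  proof -
    from that have P: "disjoint P" "{} \<notin> P" "\<Union>P \<subseteq> insert a A" "card P = Suc k" "{a} \<in> P"
      unfolding partial_partitions_def by auto
    have "a \<notin> B" if "B \<in> P - {{a}}" for B
    proof -
      have "B \<inter> {a} = {}" using that P(5) by (intro disjointD[OF P(1)]) auto
      then show ?thesis by blast
    qed
    then have "\<Union>(P - {{a}}) \<subseteq> A" using P(3) by blast
    moreover have "disjoint (P - {{a}})" using P(1) by (rule pairwise_subset) blast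
    moreover have "finite P" using P(4) card.infinite by fastforce
    then have "card (P - {{a}}) = k" using P(4,5) by simp
    ultimately show ?thesis using P(2) unfolding partial_partitions_def by auto
  qed
  have add: "insert {a} Q \<in> ?L" and fresh: "{a} \<notin> Q" if "Q \<in> ?R" for Q
  proof -
    from that have Q: "disjoint Q" "{} \<notin> Q" "\<Union>Q \<subseteq> A" "card Q = k"
      unfolding partial_partitions_def by auto
    show "{a} \<notin> Q" using Q(3) A(2) by blast
    have "disjoint (insert {a} Q)"
      using Q(3) A(2) by (intro disjoint_insert_block[OF Q(1)]) blast
    moreover have "card (insert {a} Q) = Suc k"
      using finite_partial_partition[OF A(1)] that Q(4) \<open>{a} \<notin> Q\<close> by simp
    ultimately show "insert {a} Q \<in> ?L" using Q(2,3) unfolding partial_partitions_def by auto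
  qed
  have "bij_betw (\<lambda>P. P - {{a}}) ?L ?R"
    by (rule bij_betw_byWitness[where f' = "insert {a}"]) (use remove add fresh in auto)
  then show ?thesis by (rule bij_betw_same_card)
qed

lemma enlarge_block:
  assumes A: "finite A" "a \<notin> A" and Q: "Q \<in> partial_partitions A" and B: "B \<in> Q"
  defines "P \<equiv> insert (insert a B) (Q - {B})"
  shows "P \<in> partial_partitions (insert a A)" and "card P = card Q" and "a \<in> \<Union>P" and "{a} \<notin> P"
proof -
  have Q': "disjoint Q" "{} \<notin> Q" "\<Union>Q \<subseteq> A" using Q unfolding partial_partitions_def by auto
  have avoid: "a \<notin> C" if "C \<in> Q" for C using that Q'(3) A(2) by blast
  have "B \<noteq> {}" using B Q'(2) by blast
  have new: "insert a B \<notin> Q - {B}" using avoid by blast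
  have "B \<inter> C = {}" if "C \<in> Q - {B}" for C using that B by (intro disjointD[OF Q'(1)]) auto
  then have "insert a B \<inter> \<Union>(Q - {B}) = {}" using avoid by blast
  moreover have "disjoint (Q - {B})" using Q'(1) by (rule pairwise_subset) blast
  ultimately have "disjoint P" unfolding P_def by (rule disjoint_insert_block[rotated])
  moreover have "{} \<notin> P" "\<Union>P \<subseteq> insert a A" using Q' B unfolding P_def by auto
  ultimately show "P \<in> partial_partitions (insert a A)" unfolding partial_partitions_def by simp
  have "finite Q" using finite_partial_partition[OF A(1) Q] .
  then have "card Q > 0" using B card_gt_0_iff by blast
  then show "card P = card Q" unfolding P_def using new B \<open>finite Q\<close> by simp
  show "a \<in> \<Union>P" unfolding P_def by simp
  have "insert a B \<noteq> {a}" using \<open>B \<noteq> {}\<close> avoid[OF B] by blast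
  then show "{a} \<notin> P" unfolding P_def using avoid by blast
qed

lemma enlarged_block_cases:
  assumes "a \<notin> A" and P: "P \<in> partial_partitions (insert a A)" and "a \<in> \<Union>P" and "{a} \<notin> P"
  obtains Q B where "Q \<in> partial_partitions A" and "B \<in> Q" and "P = insert (insert a B) (Q - {B})"
proof -
  have P': "disjoint P" "{} \<notin> P" "\<Union>P \<subseteq> insert a A" using P unfolding partial_partitions_def by auto
  obtain B0 where B0: "B0 \<in> P" "a \<in> B0" using assms(3) by blast
  define B where "B = B0 - {a}"
  define Q where "Q = insert B (P - {B0})"
  have others: "C \<inter> B0 = {}" if "C \<in> P - {B0}" for C
    using that B0(1) by (intro disjointD[OF P'(1)]) auto
  have "B \<noteq> {}"
  proof
    assume "B = {}"
    then have "B0 = {a}" using B0(2) unfolding B_def by blast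
    then show False using B0(1) assms(4) by simp
  qed
  then have "B \<notin> P - {B0}" using others unfolding B_def by blast
  have "B \<inter> \<Union>(P - {B0}) = {}" using others unfolding B_def by blast
  moreover have "disjoint (P - {B0})" using P'(1) by (rule pairwise_subset) blast
  ultimately have "disjoint Q" unfolding Q_def by (rule disjoint_insert_block[rotated])
  moreover have "{} \<notin> Q" using P'(2) \<open>B \<noteq> {}\<close> unfolding Q_def by blast
  moreover have "\<Union>Q \<subseteq> A" using P'(3) others B0 assms(1) unfolding Q_def B_def by blast
  ultimately have "Q \<in> partial_partitions A" unfolding partial_partitions_def by simp
  have "insert a B = B0" unfolding B_def using B0(2) by blast
  moreover have "Q - {B} = P - {B0}" unfolding Q_def using \<open>B \<notin> P - {B0}\<close> by blast
  ultimately have "P = insert (insert a B) (Q - {B})" using B0(1) by (simp add: insert_absorb)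
  then show ?thesis using that \<open>Q \<in> partial_partitions A\<close> unfolding Q_def by blast
qed

lemma inj_on_enlarge_block:
  assumes "a \<notin> A"
  shows "inj_on (\<lambda>(Q, B). insert (insert a B) (Q - {B})) (SIGMA Q:partial_partitions A. Q)"
proof (rule inj_onI, clarify)
  fix Q1 B1 Q2 B2
  assume 1: "Q1 \<in> partial_partitions A" "B1 \<in> Q1" and 2: "Q2 \<in> partial_partitions A" "B2 \<in> Q2"
    and eq: "insert (insert a B1) (Q1 - {B1}) = insert (insert a B2) (Q2 - {B2})"
  have avoid: "a \<notin> C" if "C \<in> Q" "Q \<in> partial_partitions A" for C Q
    using that assms unfolding partial_partitions_def by blast
  have new1: "insert a B1 \<notin> Q1 - {B1}" and new2: "insert a B2 \<notin> Q2 - {B2}"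
    using avoid 1(1) 2(1) by blast+
  have "insert a B1 \<in> insert (insert a B2) (Q2 - {B2})" unfolding eq[symmetric] by simp
  then have "insert a B1 = insert a B2" using new2 avoid 2(1) by blast
  then have B: "B1 = B2" using insert_ident[OF avoid[OF 1(2,1)] avoid[OF 2(2,1)]] by simp
  have new2': "insert a B1 \<notin> Q2 - {B2}" using new2 B by simp
  have "insert (insert a B1) (Q1 - {B1}) = insert (insert a B1) (Q2 - {B2})" using eq B by simp
  then have "Q1 - {B1} = Q2 - {B2}" by (simp only: insert_ident[OF new1 new2'])
  then show "Q1 = Q2 \<and> B1 = B2" using 1(2) 2(2) B by (metis insert_Diff)
qed

lemma card_partial_partitions_enlarged_block:
  assumes A: "finite A" "a \<notin> A"
  shows "card {P \<in> partial_partitions (insert a A). card P = k \<and> a \<in> \<Union>P \<and> {a} \<notin> P}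
    = k * card {Q \<in> partial_partitions A. card Q = k}" (is "card ?L = _")
proof -
  define enlarge where "enlarge = (\<lambda>(Q, B). insert (insert a B) (Q - {B :: 'a set}))"
  define S where "S = (SIGMA Q:{Q \<in> partial_partitions A. card Q = k}. Q)"
  have "enlarge ` S = ?L"
  proof
    show "enlarge ` S \<subseteq> ?L"
    proof
      fix P assume "P \<in> enlarge ` S"
      then obtain Q B where "Q \<in> partial_partitions A" "card Q = k" "B \<in> Q"
        and "P = insert (insert a B) (Q - {B})"
        unfolding S_def enlarge_def by auto
      then show "P \<in> ?L" using enlarge_block[OF A, of Q B] by simp
    qed
  next
    show "?L \<subseteq> enlarge ` S"
    proof
      fix P assume "P \<in> ?L"
      then have P: "P \<in> partial_partitions (insert a A)" "card P = k" "a \<in> \<Union>P" "{a} \<notin> P" by auto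
      then obtain Q B where QB: "Q \<in> partial_partitions A" "B \<in> Q" "P = insert (insert a B) (Q - {B})"
        using enlarged_block_cases[OF A(2)] by metis
      then have "card Q = k" using enlarge_block(2)[OF A QB(1,2)] P(2) by simp
      then have "(Q, B) \<in> S" unfolding S_def using QB by simp
      then show "P \<in> enlarge ` S" unfolding enlarge_def using QB(3) by force
    qed
  qed
  moreover have "inj_on enlarge S"
    using inj_on_enlarge_block[OF A(2)] unfolding enlarge_def S_def by (rule inj_on_subset) auto
  moreover have "card S = k * card {Q \<in> partial_partitions A. card Q = k}"
    unfolding S_def using finite_partial_partitions[OF A(1)] finite_partial_partition[OF A(1)]
    by (subst card_SigmaI) auto
  ultimately show ?thesis by (metis card_image)
qed

lemma card_partial_partitions_0:
  assumes "finite A"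
  shows "card {P \<in> partial_partitions A. card P = 0} = 1"
proof -
  have "{P \<in> partial_partitions A. card P = 0} = {{}}"
  proof
    show "{P \<in> partial_partitions A. card P = 0} \<subseteq> {{}}"
      using finite_partial_partition[OF assms] by auto
    show "{{}} \<subseteq> {P \<in> partial_partitions A. card P = 0}"
      unfolding partial_partitions_def by simp
  qed
  then show ?thesis by simp
qed

theorem card_partial_partitions:
  assumes "finite A"
  shows "card {P \<in> partial_partitions A. card P = k} = Stirling (Suc (card A)) (Suc k)"
  using assms
proof (induction A arbitrary: k rule: finite_induct)
  case empty
  have "partial_partitions ({} :: 'a set) = {{}}" unfolding partial_partitions_def by auto
  then show ?case using card_partial_partitions_0[of "{} :: 'a set"] by (cases k) simp_all
next
  case (insert a A)
  show ?case
  proof (cases k)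
    case 0
    then show ?thesis
      using card_partial_partitions_0[of "insert a A"] insert.hyps(1) by (simp del: Stirling.simps)
  next
    case (Suc j)
    let ?PP = "partial_partitions (insert a A)"
    let ?L1 = "{P \<in> ?PP. card P = Suc j \<and> a \<notin> \<Union>P}"
    let ?L2 = "{P \<in> ?PP. card P = Suc j \<and> {a} \<in> P}"
    let ?L3 = "{P \<in> ?PP. card P = Suc j \<and> a \<in> \<Union>P \<and> {a} \<notin> P}"
    have split: "{P \<in> ?PP. card P = Suc j} = ?L1 \<union> ?L2 \<union> ?L3" by blast
    have "finite ?PP" using insert.hyps(1) by (simp add: finite_partial_partitions)
    then have fin: "finite ?L1" "finite ?L2" "finite ?L3" by simp_all
    have "card {P \<in> ?PP. card P = Suc j} = card (?L1 \<union> ?L2) + card ?L3"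
      unfolding split using fin by (intro card_Un_disjoint) auto
    also have "card (?L1 \<union> ?L2) = card ?L1 + card ?L2"
      using fin by (intro card_Un_disjoint) auto
    also have "?L1 = {P \<in> partial_partitions A. card P = Suc j}"
      using partial_partitions_avoiding[OF insert.hyps(2)] by blast
    also have "card ?L2 = card {Q \<in> partial_partitions A. card Q = j}"
      using card_partial_partitions_singleton_block[OF insert.hyps] .
    also have "card ?L3 = Suc j * card {Q \<in> partial_partitions A. card Q = Suc j}"
      using card_partial_partitions_enlarged_block[OF insert.hyps] .
    finally show ?thesis using insert.IH insert.hyps Suc by simp
  qed
qed

theorem stirling2_poly_is_f_poly:
  assumes "1 \<le> d"
  shows "\<exists>K. simplicial_complex K \<and> f_poly K = stirling2_poly d"
proof -
  define A where "A = {2..d}"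
  have A: "finite A" "Suc (card A) = d" unfolding A_def using assms by simp_all
  have "finite x" if "P \<in> partial_partitions A" and "x \<in> P" for P x
  proof -
    have "x \<subseteq> A" using that unfolding partial_partitions_def by blast
    then show ?thesis using A(1) by (rule finite_subset)
  qed
  then obtain K where K: "simplicial_complex K" "f_poly K = f_poly' (partial_partitions A)"
    using ex_simplicial_complex_f_poly'[OF simplicial_complex'_partial_partitions[OF A(1)]] by blast
  have "f_poly' (partial_partitions A)
      = (\<Sum>k\<le>card A. monom (card {P \<in> partial_partitions A. card P = k}) k)"
    unfolding f_poly'_def using card_partial_partition_le[OF A(1)]
    by (intro sum_monom_1_group finite_partial_partitions A(1))
  also have "\<dots> = (\<Sum>k\<le>card A. monom (Stirling d (Suc k)) k)"
    using card_partial_partitions[OF A(1)] A(2) by simp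
  also have "{..card A} = {..<d}" using A(2) by auto
  finally show ?thesis using K unfolding stirling2_poly_def by auto
qed

theorem corollary3p10:
  fixes d :: nat
  assumes "d \<ge> 1"
  shows "(\<exists>K. simplicial_complex K \<and> f_poly K = eulerian_poly d) \<and>
         (\<exists>K. simplicial_complex K \<and> f_poly K = stirling2_poly d) \<and>
         (\<exists>K. simplicial_complex K \<and> f_poly K = derangement_poly d)"
  using eulerian_poly_is_f_poly stirling2_poly_is_f_poly[OF assms] derangement_poly_is_f_poly[OF assms]
  by blast

end
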